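(* Let $S,I:\mathbb{R}\to\mathbb{R}$ be $2\pi$-periodic Lipschitz functions and suppose there are $\alpha_0\in(0,\pi)$, $p,q\ge1$, $c_1,c_2>0$, $c_3\in(0,1]$ with \[ S(\theta)\le-c_1(\pi-\theta)^p\ \ (\theta\in[\alpha_0,\pi]),\qquad S(\theta)\ge c_1(\theta+\pi)^p\ \ (\theta\in[-\pi,-\alpha_0]), \] \[ 0\le I(\theta)\le c_2(\pi-|\theta|)^q\ \ (\theta\in[-\pi,\pi]),\qquad \min_{|\phi|\le\max\{|\theta|,\alpha_0\}}I(\phi)\ge c_3I(\theta)\ \ (\theta\in[-\pi,\pi]). \] Let $(\theta_i(t))$ solve \[ \dot\theta_i=\omega_i+\frac{\kappa}{N}\sum_{j=1}^NI(\theta_j)S(\theta_i),\qquad\theta_i(0)=\theta_i^0,\quad i=1,\dots,N, \] let $R(t)=\frac1N\sum_jI(\theta_j(t))$, $R_0=R(0)$, $\|\Omega\|_\infty=\max_i|\omega_i|$. Suppose $R_0>0$ and \[ \kappa>\max\left\{\frac{2(2c_2)^{p/q}}{c_1c_3}\cdot\frac{\|\Omega\|_\infty}{R_0^{1+p/q}},\ \frac{2}{c_1c_3(\pi-\alpha_0)^p}\cdot\frac{\|\Omega\|_\infty}{R_0}\right\}. \] Then (a) $R(t)>\frac{c_3R_0}{2}$ for all $t\ge0$, and (b) $\sup_{t\ge0}\theta_i(t)-\inf_{t\ge0}\theta_i(t)<2\pi$ for all $i=1,\dots,N$.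
   Context: This is the general Winfree model with influence function $I$ and sensitivity function $S$; $R$ is the average influence. *)

theory Defs
  imports "HOL-Analysis.Analysis"
begin

end

theory Submission
  imports Defs
begin

text \<open>
  Fix \<open>\<beta>\<close> slightly below \<open>\<pi>\<close>. As long as \<open>R > c3 R0 / 2\<close>, the coupling term
  \<open>\<kappa> R S\<close> dominates the natural frequencies on the bands \<open>\<alpha>0 \<le> \<bar>\<theta> - 2\<pi>k\<bar> \<le> \<beta>\<close> and points
  towards \<open>2\<pi>k\<close> there, so these bands are barriers. An oscillator starting within \<open>\<beta>\<close> of
  some \<open>2\<pi>k\<close> then stays in the window \<open>\<bar>\<theta> - 2\<pi>k\<bar> \<le> max \<bar>\<theta>(0) - 2\<pi>k\<bar> \<alpha>0\<close>, where
  \<open>I \<ge> c3 I(\<theta>(0))\<close>, while every other oscillator has initial influence at most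
  \<open>c2 (\<pi> - \<beta>)^q\<close>. Hence \<open>R \<ge> c3 (R0 - c2 (\<pi> - \<beta>)^q)\<close> up to the first time \<open>R\<close> could
  reach \<open>c3 R0 / 2\<close>; the lower bound on \<open>\<kappa>\<close> is what allows \<open>\<beta>\<close> to make this exceed
  \<open>c3 R0 / 2\<close> while keeping the barriers, so by continuity \<open>R\<close> never gets that low.
  With the barriers in force for all time, every phase is confined to an interval
  of length less than \<open>2\<pi>\<close>.
\<close>

lemma stays_below_barrier:
  fixes \<phi> v :: "real \<Rightarrow> real"
  assumes "ta \<le> s" and "{ta..s} \<subseteq> D"
    and der: "\<And>t. t \<in> {ta..s} \<Longrightarrow> (\<phi> has_real_derivative v t) (at t within D)"
    and "\<phi> ta \<le> b"
    and cross: "\<And>t. t \<in> {ta..<s} \<Longrightarrow> \<phi> t = b \<Longrightarrow> v t < 0"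
  shows "\<phi> s \<le> b"
proof (rule ccontr)
  assume "\<not> \<phi> s \<le> b"
  then have "b < \<phi> s" by simp
  have cont: "continuous_on {ta..s} \<phi>"
    unfolding continuous_on_eq_continuous_within
    using DERIV_continuous[OF der] continuous_within_subset assms(2) by blast
  \<comment> \<open>\<open>u\<close> is the last time with \<open>\<phi> \<le> b\<close>; there \<open>\<phi> = b\<close>, and \<open>v u < 0\<close> pushes \<open>\<phi>\<close> below \<open>b\<close> right after \<open>u\<close>.\<close>
  define A where "A = {ta..s} \<inter> \<phi> -` {..b}"
  define u where "u = Sup A"
  have "closed A" unfolding A_def by (rule continuous_closed_preimage[OF cont]) auto
  moreover have "ta \<in> A" using assms by (auto simp: A_def)
  moreover have bdd: "bdd_above A" unfolding A_def by (auto intro: bdd_above_Int1)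
  ultimately have "u \<in> A" unfolding u_def using closed_contains_Sup by blast
  then have u: "ta \<le> u" "u \<le> s" "\<phi> u \<le> b" by (auto simp: A_def)
  have above: "b < \<phi> t" if "u < t" "t \<le> s" for t
  proof (rule ccontr)
    assume "\<not> b < \<phi> t"
    then have "t \<in> A" using that u by (auto simp: A_def)
    then have "t \<le> u" unfolding u_def using bdd by (rule cSup_upper)
    with that show False by simp
  qed
  have "u < s" using u \<open>b < \<phi> s\<close> by (cases "u = s") auto
  obtain c where c: "u \<le> c" "c \<le> s" "\<phi> c = b"
    using IVT'[of \<phi> u b s] u \<open>b < \<phi> s\<close> continuous_on_subset[OF cont] by force
  then have "\<phi> u = b" using above[of c] by force
  then have "v u < 0" using cross u \<open>u < s\<close> by auto
  then obtain d where "d > 0" and dec: "\<And>h. 0 < h \<Longrightarrow> u + h \<in> D \<Longrightarrow> h < d \<Longrightarrow> \<phi> (u + h) < \<phi> u"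
    using has_real_derivative_neg_dec_right[OF der] u by (metis atLeastAtMost_iff)
  define h where "h = min d (s - u) / 2"
  have "0 < h" "h < d" "u + h \<le> s" using \<open>d > 0\<close> \<open>u < s\<close> by (auto simp: h_def min_def field_simps)
  moreover have "u + h \<in> D" using assms(2) u \<open>0 < h\<close> \<open>u + h \<le> s\<close> by auto
  ultimately have "\<phi> (u + h) < b" using dec \<open>\<phi> u = b\<close> by metis
  then show False using above[of "u + h"] \<open>0 < h\<close> \<open>u + h \<le> s\<close> by simp
qed

lemma stays_above_barrier:
  fixes \<phi> v :: "real \<Rightarrow> real"
  assumes "ta \<le> s" and "{ta..s} \<subseteq> D"
    and der: "\<And>t. t \<in> {ta..s} \<Longrightarrow> (\<phi> has_real_derivative v t) (at t within D)"
    and "b \<le> \<phi> ta"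
    and cross: "\<And>t. t \<in> {ta..<s} \<Longrightarrow> \<phi> t = b \<Longrightarrow> 0 < v t"
  shows "b \<le> \<phi> s"
  using stays_below_barrier[of ta s D "\<lambda>t. - \<phi> t" "\<lambda>t. - v t" "- b"] assms
  by (auto intro: DERIV_minus)

lemma stays_in_barrier_band:
  fixes \<phi> v :: "real \<Rightarrow> real"
  assumes "ta \<le> s" and "{ta..s} \<subseteq> D"
    and der: "\<And>t. t \<in> {ta..s} \<Longrightarrow> (\<phi> has_real_derivative v t) (at t within D)"
    and "\<phi> ta \<in> {a..b}"
    and "\<And>t. t \<in> {ta..<s} \<Longrightarrow> \<phi> t = a \<Longrightarrow> 0 < v t"
    and "\<And>t. t \<in> {ta..<s} \<Longrightarrow> \<phi> t = b \<Longrightarrow> v t < 0"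
  shows "\<phi> s \<in> {a..b}"
  using stays_above_barrier[of ta s D \<phi> v a] stays_below_barrier[of ta s D \<phi> v b] assms
  by auto

lemma continuous_induction_gt:
  fixes f :: "real \<Rightarrow> real"
  assumes cont: "continuous_on {0..} f"
    and step: "\<And>T. 0 \<le> T \<Longrightarrow> \<forall>s\<in>{0..<T}. r < f s \<Longrightarrow> r < f T"
    and "0 \<le> t"
  shows "r < f t"
proof (rule ccontr)
  assume "\<not> r < f t"
  define A where "A = {0..} \<inter> f -` {..r}"
  have "A \<noteq> {}" using \<open>0 \<le> t\<close> \<open>\<not> r < f t\<close> by (auto simp: A_def)
  moreover have bdd: "bdd_below A" unfolding A_def by (rule bdd_belowI[of _ 0]) auto
  moreover have "closed A" unfolding A_def by (rule continuous_closed_preimage[OF cont]) auto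
  ultimately have "Inf A \<in> A" by (rule closed_contains_Inf)
  moreover have "r < f s" if "s \<in> {0..<Inf A}" for s
  proof (rule ccontr)
    assume "\<not> r < f s"
    then have "s \<in> A" using that by (auto simp: A_def)
    then have "Inf A \<le> s" using bdd by (rule cInf_lower)
    with that show False by simp
  qed
  ultimately show False using step[of "Inf A"] by (auto simp: A_def)
qed

lemma exists_int_shift_into_Ioc:
  fixes x a P :: real
  assumes "0 < P"
  shows "\<exists>k::int. x - of_int k * P \<in> {a<..a + P}"
proof
  define k where "k = \<lceil>(x - a) / P\<rceil> - 1"
  have "of_int k < (x - a) / P" "(x - a) / P \<le> of_int k + 1"
    unfolding k_def by linarith+
  then show "x - of_int k * P \<in> {a<..a + P}"
    using assms by (auto simp: field_simps)
qed

lemma isCont_exists_gt_left: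
  fixes f :: "real \<Rightarrow> real"
  assumes "isCont f m" "M < f m" "l < m"
  shows "\<exists>x\<in>{l<..<m}. M < f x"
proof -
  have "(f \<longlongrightarrow> f m) (at_left m)"
    using assms(1) by (simp add: isCont_def filterlim_at_split)
  then have "eventually (\<lambda>x. M < f x) (at_left m)"
    using assms(2) by (rule order_tendstoD(1))
  then have "eventually (\<lambda>x. M < f x \<and> x \<in> {l<..<m}) (at_left m)"
    using eventually_at_left_real[OF assms(3)] by (rule eventually_conj)
  then show ?thesis
    using eventually_happens' trivial_limit_at_left_real by blast
qed

lemma SUP_minus_INF_less:
  fixes f :: "'a \<Rightarrow> real"
  assumes "f ` A \<subseteq> {a..b}" "A \<noteq> {}" "b - a < c"
  shows "bdd_above (f ` A) \<and> bdd_below (f ` A) \<and> (SUP x\<in>A. f x) - (INF x\<in>A. f x) < c"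
proof -
  have "bdd_above (f ` A)" "bdd_below (f ` A)"
    using assms(1) by (meson bdd_above_Icc bdd_above_mono bdd_below_Icc bdd_below_mono)+
  moreover have "(SUP x\<in>A. f x) \<le> b" "a \<le> (INF x\<in>A. f x)"
    using assms by (auto intro!: cSUP_least cINF_greatest)
  ultimately show ?thesis using assms(3) by simp
qed

definition restoring_on ::
    "real set \<Rightarrow> real \<Rightarrow> real \<Rightarrow> (real \<Rightarrow> real) \<Rightarrow> (real \<Rightarrow> real) \<Rightarrow> bool" where
  "restoring_on A \<alpha> \<beta> \<phi> v \<longleftrightarrow> (\<forall>s\<in>A. \<forall>k::int.
     (\<phi> s - of_int k * (2 * pi) \<in> {\<alpha>..\<beta>} \<longrightarrow> v s < 0) \<and>
     (\<phi> s - of_int k * (2 * pi) \<in> {-\<beta>..-\<alpha>} \<longrightarrow> 0 < v s))"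

lemma restoring_onD:
  assumes "restoring_on A \<alpha> \<beta> \<phi> v" "s \<in> A"
  shows "\<phi> s - of_int k * (2 * pi) \<in> {\<alpha>..\<beta>} \<Longrightarrow> v s < 0"
    and "\<phi> s - of_int k * (2 * pi) \<in> {-\<beta>..-\<alpha>} \<Longrightarrow> 0 < v s"
  using assms unfolding restoring_on_def by blast+

lemma restoring_on_subset: "restoring_on B \<alpha> \<beta> \<phi> v \<Longrightarrow> A \<subseteq> B \<Longrightarrow> restoring_on A \<alpha> \<beta> \<phi> v"
  unfolding restoring_on_def by blast

lemma restoring_confines:
  fixes \<phi> v :: "real \<Rightarrow> real"
  assumes der: "\<And>t. 0 \<le> t \<Longrightarrow> (\<phi> has_real_derivative v t) (at t within {0..})"
    and res: "restoring_on {0..<T} \<alpha> \<beta> \<phi> v"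
    and "\<alpha> \<le> \<beta>" and start: "\<bar>\<phi> 0 - of_int k * (2 * pi)\<bar> \<le> \<beta>"
    and "0 \<le> t" "t \<le> T"
  shows "\<bar>\<phi> t - of_int k * (2 * pi)\<bar> \<le> max \<bar>\<phi> 0 - of_int k * (2 * pi)\<bar> \<alpha>"
proof -
  define m where "m = max \<bar>\<phi> 0 - of_int k * (2 * pi)\<bar> \<alpha>"
  define \<psi> where "\<psi> s = \<phi> s - of_int k * (2 * pi)" for s
  have m: "\<alpha> \<le> m" "m \<le> \<beta>" using assms(3) start by (auto simp: m_def)
  have "\<psi> t \<in> {-m..m}"
  proof (rule stays_in_barrier_band[of 0 t "{0..}" \<psi> v])
    show "(\<psi> has_real_derivative v s) (at s within {0..})" if "s \<in> {0..t}" for s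
      unfolding \<psi>_def using der[of s] that by (auto intro!: derivative_eq_intros)
    show "0 < v s" if "s \<in> {0..<t}" "\<psi> s = - m" for s
      using restoring_onD(2)[OF res, of s k] that m \<open>t \<le> T\<close> by (auto simp: \<psi>_def)
    show "v s < 0" if "s \<in> {0..<t}" "\<psi> s = m" for s
      using restoring_onD(1)[OF res, of s k] that m \<open>t \<le> T\<close> by (auto simp: \<psi>_def)
  qed (use \<open>0 \<le> t\<close> in \<open>auto simp: \<psi>_def m_def\<close>)
  then show ?thesis by (simp add: \<psi>_def m_def abs_le_iff)
qed

lemma restoring_bounded_oscillation_far:
  fixes \<phi> v :: "real \<Rightarrow> real"
  assumes der: "\<And>t. 0 \<le> t \<Longrightarrow> (\<phi> has_real_derivative v t) (at t within {0..})"
    and res: "restoring_on {0..} \<alpha> \<beta> \<phi> v"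
    and "0 < \<alpha>" "\<alpha> < \<beta>" "\<beta> \<le> pi"
    and start: "\<phi> 0 - of_int k * (2 * pi) \<in> {\<beta>..2 * pi - \<beta>}"
  shows "\<exists>a b. b - a < 2 * pi \<and> \<phi> ` {0..} \<subseteq> {a..b}"
proof -
  define z where "z t = \<phi> t - of_int k * (2 * pi)" for t
  have z_der: "(z has_real_derivative v t) (at t within {0..})" if "0 \<le> t" for t
    unfolding z_def using der[OF that] by (auto intro!: derivative_eq_intros)
  have z_shift: "z t - 2 * pi = \<phi> t - of_int (k + 1) * (2 * pi)" for t
    by (simp add: z_def algebra_simps)
  have neg: "v t < 0" if "0 \<le> t" "z t \<in> {\<alpha>..\<beta>} \<or> z t - 2 * pi \<in> {\<alpha>..\<beta>}" for t
    using that restoring_onD(1)[OF res, of t k] restoring_onD(1)[OF res, of t "k + 1"]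
    unfolding z_shift[symmetric] z_def[symmetric] by auto
  have pos: "0 < v t" if "0 \<le> t" "z t \<in> {-\<beta>..-\<alpha>} \<or> z t - 2 * pi \<in> {-\<beta>..-\<alpha>}" for t
    using that restoring_onD(2)[OF res, of t k] restoring_onD(2)[OF res, of t "k + 1"]
    unfolding z_shift[symmetric] z_def[symmetric] by auto
  have band: "z t \<in> {-\<alpha>..2 * pi + \<alpha>}" if "0 \<le> t" for t
    by (rule stays_in_barrier_band[of 0 t "{0..}" z v])
      (use that z_der start assms(3-5) in \<open>auto simp: z_def intro!: neg pos\<close>)
  have \<phi>_eq: "\<phi> t = z t + of_int k * (2 * pi)" for t by (simp add: z_def)
  consider (dips) t1 where "0 \<le> t1" "z t1 < \<beta>" | (stays) "\<forall>t\<ge>0. \<beta> \<le> z t" by fastforce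
  then show ?thesis
  proof cases
    case dips
    \<comment> \<open>Once below \<open>\<beta>\<close> the phase stays below \<open>\<beta>\<close>; once above \<open>2\<pi> - \<beta>\<close> it stays above.\<close>
    have "z t \<le> 2 * pi - \<beta>" if "0 \<le> t" for t
    proof (cases "t1 \<le> t")
      case True
      have "z t \<le> \<beta>"
        by (rule stays_below_barrier[of t1 t "{0..}" z v])
          (use True dips z_der assms(3,4) in \<open>auto intro!: neg\<close>)
      then show ?thesis using assms(5) by simp
    next
      case False
      show ?thesis
      proof (rule ccontr)
        assume "\<not> z t \<le> 2 * pi - \<beta>"
        then have "2 * pi - \<beta> \<le> z t1"
          by (intro stays_above_barrier[of t t1 "{0..}" z v])
            (use False that z_der assms(3-5) in \<open>auto intro!: pos\<close>)
        then show False using dips assms(5) by simp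
      qed
    qed
    then have "\<phi> ` {0..} \<subseteq> {of_int k * (2 * pi) - \<alpha> .. of_int k * (2 * pi) + 2 * pi - \<beta>}"
      using band by (force simp: \<phi>_eq)
    then show ?thesis using assms(4) by (intro exI) auto
  next
    case stays
    then have "\<phi> ` {0..} \<subseteq> {of_int k * (2 * pi) + \<beta> .. of_int k * (2 * pi) + 2 * pi + \<alpha>}"
      using band by (force simp: \<phi>_eq)
    then show ?thesis using assms(4) by (intro exI) auto
  qed
qed

lemma restoring_bounded_oscillation:
  fixes \<phi> v :: "real \<Rightarrow> real"
  assumes der: "\<And>t. 0 \<le> t \<Longrightarrow> (\<phi> has_real_derivative v t) (at t within {0..})"
    and res: "restoring_on {0..} \<alpha> \<beta> \<phi> v"
    and "0 < \<alpha>" "\<alpha> < \<beta>" "\<beta> < pi"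
  shows "\<exists>a b. b - a < 2 * pi \<and> \<phi> ` {0..} \<subseteq> {a..b}"
proof -
  obtain k :: int where k: "\<phi> 0 - of_int k * (2 * pi) \<in> {-pi<..pi}"
    using exists_int_shift_into_Ioc[of "2 * pi" "\<phi> 0" "-pi"] by auto
  define y0 where "y0 = \<phi> 0 - of_int k * (2 * pi)"
  have far: ?thesis if "\<phi> 0 - of_int j * (2 * pi) \<in> {\<beta>..2 * pi - \<beta>}" for j
    using restoring_bounded_oscillation_far[OF der res assms(3,4) less_imp_le[OF assms(5)] that]
    by blast
  consider (near) "\<bar>y0\<bar> \<le> \<beta>" | (right) "\<beta> < y0" | (left) "y0 < -\<beta>" by linarith
  then show ?thesis
  proof cases
    case near
    define m where "m = max \<bar>y0\<bar> \<alpha>"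
    have "\<bar>\<phi> t - of_int k * (2 * pi)\<bar> \<le> m" if "0 \<le> t" for t
    proof -
      have "restoring_on {0..<t} \<alpha> \<beta> \<phi> v" using res by (rule restoring_on_subset) auto
      then show ?thesis
        using restoring_confines[where k = k, OF der] near assms(4) that by (simp add: y0_def m_def)
    qed
    then have "\<phi> ` {0..} \<subseteq> {of_int k * (2 * pi) - m .. of_int k * (2 * pi) + m}"
      by (force simp: abs_le_iff)
    moreover have "m < pi" using near assms(4,5) by (simp add: m_def)
    ultimately show ?thesis by (intro exI) auto
  next
    case right
    then have "\<phi> 0 - of_int k * (2 * pi) \<in> {\<beta>..2 * pi - \<beta>}" using k assms(5) by (auto simp: y0_def)
    then show ?thesis by (rule far)
  next
    case left
    then have "\<phi> 0 - of_int (k - 1) * (2 * pi) \<in> {\<beta>..2 * pi - \<beta>}"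
      using k assms(5) by (auto simp: y0_def algebra_simps)
    then show ?thesis by (rule far)
  qed
qed

lemma influence_lower_bound:
  fixes \<phi> v I :: "real \<Rightarrow> real"
  assumes der: "\<And>t. 0 \<le> t \<Longrightarrow> (\<phi> has_real_derivative v t) (at t within {0..})"
    and res: "restoring_on {0..<T} \<alpha> \<beta> \<phi> v"
    and I_periodic: "\<And>x. I (x + 2 * pi) = I x"
    and I_bounds: "\<forall>x\<in>{-pi..pi}. 0 \<le> I x \<and> I x \<le> c2 * (pi - \<bar>x\<bar>) powr q"
    and I_min: "\<forall>x\<in>{-pi..pi}. \<forall>\<phi>. \<bar>\<phi>\<bar> \<le> max \<bar>x\<bar> \<alpha> \<longrightarrow> I \<phi> \<ge> c3 * I x"
    and "0 \<le> c2" "0 \<le> c3" "0 \<le> q" "\<alpha> \<le> \<beta>"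
    and "0 \<le> t" "t \<le> T"
  shows "c3 * (I (\<phi> 0) - c2 * (pi - \<beta>) powr q) \<le> I (\<phi> t)"
proof -
  interpret I: periodic_fun_simple I "2 * pi" by unfold_locales (rule I_periodic)
  have reduce: "\<exists>k::int. x - of_int k * (2 * pi) \<in> {-pi..pi}" for x
    using exists_int_shift_into_Ioc[of "2 * pi" x "-pi"] by (auto intro: less_imp_le)
  have I_nonneg: "0 \<le> I x" for x
    using reduce[of x] I_bounds I.minus_of_int by metis
  obtain k :: int where k: "\<phi> 0 - of_int k * (2 * pi) \<in> {-pi..pi}" using reduce by blast
  define y0 where "y0 = \<phi> 0 - of_int k * (2 * pi)"
  have "0 \<le> c3 * (c2 * (pi - \<beta>) powr q)" using assms(6,7) by simp
  show ?thesis
  proof (cases "\<bar>y0\<bar> \<le> \<beta>")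
    case True
    then have "\<bar>\<phi> t - of_int k * (2 * pi)\<bar> \<le> max \<bar>y0\<bar> \<alpha>"
      using restoring_confines[OF der res] assms(9-11) by (simp add: y0_def)
    then have "c3 * I y0 \<le> I (\<phi> t - of_int k * (2 * pi))"
      using I_min k by (simp add: y0_def)
    then have "c3 * I (\<phi> 0) \<le> I (\<phi> t)" by (simp add: y0_def I.minus_of_int)
    then show ?thesis using \<open>0 \<le> c3 * (c2 * (pi - \<beta>) powr q)\<close> by (simp add: algebra_simps)
  next
    case False
    have "I y0 \<le> c2 * (pi - \<bar>y0\<bar>) powr q" using I_bounds k by (simp add: y0_def)
    also have "\<dots> \<le> c2 * (pi - \<beta>) powr q"
      using False k assms(6,8) by (intro mult_left_mono powr_mono2) (auto simp: y0_def)
    finally have "I (\<phi> 0) \<le> c2 * (pi - \<beta>) powr q" by (simp add: y0_def I.minus_of_int)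
    then have "c3 * (I (\<phi> 0) - c2 * (pi - \<beta>) powr q) \<le> 0"
      using assms(7) by (simp add: mult_nonneg_nonpos)
    then show ?thesis using I_nonneg[of "\<phi> t"] by linarith
  qed
qed

lemma coupled_velocity_neg:
  fixes w M \<kappa> r \<rho> \<mu> \<sigma> :: real
  assumes "\<bar>w\<bar> \<le> M" "0 \<le> r" "r \<le> \<rho>" "0 \<le> \<mu>" "M < \<kappa> * r * \<mu>" "\<sigma> \<le> - \<mu>"
  shows "w + \<kappa> * \<rho> * \<sigma> < 0"
proof -
  have "0 \<le> \<kappa>"
  proof (rule ccontr)
    assume "\<not> 0 \<le> \<kappa>"
    then have "\<kappa> * r * \<mu> \<le> 0" using assms(2,4) by (simp add: mult_nonpos_nonneg)
    then show False using assms(1,5) by linarith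
  qed
  then have "\<kappa> * \<rho> * \<sigma> \<le> \<kappa> * \<rho> * (- \<mu>)"
    using assms by (intro mult_left_mono) auto
  moreover have "\<kappa> * r * \<mu> \<le> \<kappa> * \<rho> * \<mu>"
    using assms \<open>0 \<le> \<kappa>\<close> by (intro mult_right_mono mult_left_mono) auto
  ultimately show ?thesis using assms(1,5) by linarith
qed

lemma coupled_velocity_pos:
  fixes w M \<kappa> r \<rho> \<mu> \<sigma> :: real
  assumes "\<bar>w\<bar> \<le> M" "0 \<le> r" "r \<le> \<rho>" "0 \<le> \<mu>" "M < \<kappa> * r * \<mu>" "\<mu> \<le> \<sigma>"
  shows "0 < w + \<kappa> * \<rho> * \<sigma>"
proof -
  have "- w + \<kappa> * \<rho> * (- \<sigma>) < 0"
    by (rule coupled_velocity_neg[where M = M and r = r and \<mu> = \<mu>]) (use assms in auto)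
  then show ?thesis by simp
qed

lemma sensitivity_bounds_on_band:
  fixes S :: "real \<Rightarrow> real"
  assumes S_right: "\<forall>x\<in>{\<alpha>..pi}. S x \<le> - c * (pi - x) powr p"
    and S_left: "\<forall>x\<in>{-pi..-\<alpha>}. S x \<ge> c * (x + pi) powr p"
    and "0 \<le> c" "0 \<le> p" "\<beta> \<le> pi"
  shows "\<forall>x\<in>{\<alpha>..\<beta>}. S x \<le> - (c * (pi - \<beta>) powr p)"
    and "\<forall>x\<in>{-\<beta>..-\<alpha>}. c * (pi - \<beta>) powr p \<le> S x"
proof -
  have tail: "c * (pi - \<beta>) powr p \<le> c * y powr p" if "pi - \<beta> \<le> y" for y
    using that assms(3-5) by (intro mult_left_mono powr_mono2) auto
  show "\<forall>x\<in>{\<alpha>..\<beta>}. S x \<le> - (c * (pi - \<beta>) powr p)"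
  proof
    fix x assume x: "x \<in> {\<alpha>..\<beta>}"
    then have "S x \<le> - c * (pi - x) powr p" using S_right assms(5) by auto
    moreover have "c * (pi - \<beta>) powr p \<le> c * (pi - x) powr p" using x by (intro tail) auto
    ultimately show "S x \<le> - (c * (pi - \<beta>) powr p)" by simp
  qed
  show "\<forall>x\<in>{-\<beta>..-\<alpha>}. c * (pi - \<beta>) powr p \<le> S x"
  proof
    fix x assume x: "x \<in> {-\<beta>..-\<alpha>}"
    then have "c * (x + pi) powr p \<le> S x" using S_left assms(5) by auto
    moreover have "c * (pi - \<beta>) powr p \<le> c * (x + pi) powr p" using x by (intro tail) auto
    ultimately show "c * (pi - \<beta>) powr p \<le> S x" by simp
  qed
qed

lemma exists_trapping_width:
  fixes \<alpha>0 p q c1 c2 c3 \<kappa> M R0 :: real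
  assumes "0 < \<alpha>0" "\<alpha>0 < pi" "0 < p" "0 < q" "0 < c1" "0 < c2" "0 < c3" "0 \<le> M" "0 < R0"
    and \<kappa>: "\<kappa> > max (2 * (2 * c2) powr (p / q) / (c1 * c3) * M / R0 powr (1 + p / q))
                    (2 / (c1 * c3 * (pi - \<alpha>0) powr p) * M / R0)"
  obtains \<beta> where "\<alpha>0 < \<beta>" "\<beta> < pi" "c2 * (pi - \<beta>) powr q < R0 / 2"
    and "M < \<kappa> * (c3 * R0 / 2) * (c1 * (pi - \<beta>) powr p)"
proof -
  \<comment> \<open>The two lower bounds on \<open>\<kappa>\<close> say \<open>M < K m^p\<close> for \<open>m = \<pi> - \<alpha>0\<close> and for \<open>m = x0\<close>,
    where \<open>c2 x0^q = R0 / 2\<close>; a slightly smaller \<open>m\<close> makes both strict.\<close>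
  define K where "K = \<kappa> * (c3 * R0 / 2) * c1"
  define x0 where "x0 = (R0 / (2 * c2)) powr (1 / q)"
  have "0 < x0" using assms by (simp add: x0_def)
  have x0q: "c2 * x0 powr q = R0 / 2" using assms by (simp add: x0_def powr_powr)
  have "M < K * (pi - \<alpha>0) powr p"
  proof -
    have "2 / (c1 * c3 * (pi - \<alpha>0) powr p) * M / R0 < \<kappa>" using \<kappa> by simp
    then show ?thesis using assms by (simp add: K_def field_simps)
  qed
  moreover have "M < K * x0 powr p"
  proof -
    define L where "L = 2 * (2 * c2) powr (p / q) / (c1 * c3) / R0 powr (1 + p / q)"
    have "0 < L" using assms by (simp add: L_def)
    have "x0 powr p = R0 powr (p / q) / (2 * c2) powr (p / q)"
      using assms by (simp add: x0_def powr_powr powr_divide)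
    moreover have "R0 powr (1 + p / q) = R0 * R0 powr (p / q)"
      using assms by (simp add: powr_add)
    ultimately have "K * x0 powr p = \<kappa> / L" using assms by (simp add: K_def L_def field_simps)
    moreover have "M * L < \<kappa>" using \<kappa> by (simp add: L_def field_simps)
    ultimately show ?thesis using \<open>0 < L\<close> by (simp add: pos_less_divide_eq)
  qed
  ultimately have "M < K * min (pi - \<alpha>0) x0 powr p" by (simp add: min_def)
  moreover have "isCont (\<lambda>x. K * x powr p) (min (pi - \<alpha>0) x0)"
    using assms \<open>0 < x0\<close> by (intro continuous_intros) auto
  ultimately obtain x where x: "0 < x" "x < pi - \<alpha>0" "x < x0" "M < K * x powr p"
    using isCont_exists_gt_left[of _ _ M 0] assms \<open>0 < x0\<close> by fastforce
  show thesis
  proof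
    show "\<alpha>0 < pi - x" "pi - x < pi" using x by auto
    have "c2 * x powr q < c2 * x0 powr q"
      using x assms by (intro mult_strict_left_mono powr_less_mono2) auto
    then show "c2 * (pi - (pi - x)) powr q < R0 / 2" by (simp add: x0q)
    show "M < \<kappa> * (c3 * R0 / 2) * (c1 * (pi - (pi - x)) powr p)"
      using x(4) by (simp add: K_def mult.assoc)
  qed
qed

locale winfree =
  fixes S I :: "real \<Rightarrow> real" and \<omega> :: "'n::finite \<Rightarrow> real" and \<theta> :: "'n \<Rightarrow> real \<Rightarrow> real"
    and \<kappa> :: real
  assumes S_periodic: "S (x + 2 * pi) = S x"
    and I_periodic: "I (x + 2 * pi) = I x"
    and I_continuous: "continuous_on UNIV I"
    and phase_ode: "0 \<le> t \<Longrightarrow> (\<theta> i has_real_derivative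
          \<omega> i + \<kappa> / real CARD('n) * (\<Sum>j\<in>UNIV. I (\<theta> j t)) * S (\<theta> i t)) (at t within {0..})"
begin

sublocale S: periodic_fun_simple S "2 * pi"
  by unfold_locales (rule S_periodic)

definition R :: "real \<Rightarrow> real" where
  "R t = (\<Sum>j\<in>UNIV. I (\<theta> j t)) / real CARD('n)"

definition velocity :: "'n \<Rightarrow> real \<Rightarrow> real" where
  "velocity i t = \<omega> i + \<kappa> * R t * S (\<theta> i t)"

lemma phase_has_derivative: "0 \<le> t \<Longrightarrow> (\<theta> i has_real_derivative velocity i t) (at t within {0..})"
  using phase_ode by (simp add: velocity_def R_def)

lemma continuous_on_R: "continuous_on {0..} R"
proof -
  have "continuous_on {0..} (\<theta> j)" for j
    unfolding continuous_on_eq_continuous_within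
    using phase_has_derivative DERIV_continuous by fastforce
  then show ?thesis
    unfolding R_def[abs_def]
    by (intro continuous_intros continuous_on_compose2[OF I_continuous]) auto
qed

lemma restoring_phase:
  assumes "\<forall>i. \<bar>\<omega> i\<bar> \<le> M" "0 \<le> r" "0 \<le> \<mu>" "M < \<kappa> * r * \<mu>"
    and S_right: "\<forall>x\<in>{\<alpha>..\<beta>}. S x \<le> - \<mu>" and S_left: "\<forall>x\<in>{-\<beta>..-\<alpha>}. \<mu> \<le> S x"
    and R_gt: "\<forall>t\<in>A. r < R t"
  shows "restoring_on A \<alpha> \<beta> (\<theta> i) (velocity i)"
  unfolding restoring_on_def velocity_def
proof (intro ballI allI conjI impI)
  fix s k assume s: "s \<in> A"
  then have "r \<le> R s" using R_gt by (simp add: less_imp_le)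
  show "\<omega> i + \<kappa> * R s * S (\<theta> i s) < 0" if "\<theta> i s - of_int k * (2 * pi) \<in> {\<alpha>..\<beta>}"
    using coupled_velocity_neg[OF _ assms(2) \<open>r \<le> R s\<close> assms(3,4)] assms(1) S_right that
    by (metis S.minus_of_int)
  show "0 < \<omega> i + \<kappa> * R s * S (\<theta> i s)" if "\<theta> i s - of_int k * (2 * pi) \<in> {-\<beta>..-\<alpha>}"
    using coupled_velocity_pos[OF _ assms(2) \<open>r \<le> R s\<close> assms(3,4)] assms(1) S_left that
    by (metis S.minus_of_int)
qed

lemma R_lower_bound:
  assumes res: "\<And>j. restoring_on {0..<T} \<alpha> \<beta> (\<theta> j) (velocity j)"
    and I_bounds: "\<forall>x\<in>{-pi..pi}. 0 \<le> I x \<and> I x \<le> c2 * (pi - \<bar>x\<bar>) powr q"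
    and I_min: "\<forall>x\<in>{-pi..pi}. \<forall>\<phi>. \<bar>\<phi>\<bar> \<le> max \<bar>x\<bar> \<alpha> \<longrightarrow> I \<phi> \<ge> c3 * I x"
    and "0 \<le> c2" "0 \<le> c3" "0 \<le> q" "\<alpha> \<le> \<beta>" "0 \<le> t" "t \<le> T"
  shows "c3 * (R 0 - c2 * (pi - \<beta>) powr q) \<le> R t"
proof -
  let ?c = "c2 * (pi - \<beta>) powr q"
  have "c3 * (R 0 - ?c) * real CARD('n) = c3 * (\<Sum>j\<in>UNIV. I (\<theta> j 0)) - c3 * ?c * real CARD('n)"
    by (simp add: R_def field_simps)
  also have "\<dots> = (\<Sum>j\<in>UNIV. c3 * (I (\<theta> j 0) - ?c))"
    by (simp add: right_diff_distrib sum_subtractf sum_distrib_left mult_ac)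
  also have "\<dots> \<le> (\<Sum>j\<in>UNIV. I (\<theta> j t))"
    using influence_lower_bound[OF phase_has_derivative res I_periodic I_bounds I_min assms(4-)]
    by (intro sum_mono)
  also have "\<dots> = R t * real CARD('n)" by (simp add: R_def)
  finally show ?thesis by simp
qed

lemma R_stays_above:
  assumes I_bounds: "\<forall>x\<in>{-pi..pi}. 0 \<le> I x \<and> I x \<le> c2 * (pi - \<bar>x\<bar>) powr q"
    and I_min: "\<forall>x\<in>{-pi..pi}. \<forall>\<phi>. \<bar>\<phi>\<bar> \<le> max \<bar>x\<bar> \<alpha> \<longrightarrow> I \<phi> \<ge> c3 * I x"
    and "0 \<le> c2" "0 < c3" "0 \<le> q" "\<alpha> \<le> \<beta>"
    and "0 < R 0" "c2 * (pi - \<beta>) powr q < R 0 / 2"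
    and "\<forall>i. \<bar>\<omega> i\<bar> \<le> M" "0 \<le> \<mu>" "M < \<kappa> * (c3 * R 0 / 2) * \<mu>"
    and "\<forall>x\<in>{\<alpha>..\<beta>}. S x \<le> - \<mu>" "\<forall>x\<in>{-\<beta>..-\<alpha>}. \<mu> \<le> S x"
    and "0 \<le> t"
  shows "c3 * R 0 / 2 < R t"
proof (rule continuous_induction_gt[OF continuous_on_R _ \<open>0 \<le> t\<close>])
  fix T assume "0 \<le> T" "\<forall>s\<in>{0..<T}. c3 * R 0 / 2 < R s"
  then have "restoring_on {0..<T} \<alpha> \<beta> (\<theta> j) (velocity j)" for j
    by (intro restoring_phase[where M = M and r = "c3 * R 0 / 2" and \<mu> = \<mu>]) (use assms in auto)
  then have "c3 * (R 0 - c2 * (pi - \<beta>) powr q) \<le> R T"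
    by (rule R_lower_bound) (use assms \<open>0 \<le> T\<close> in auto)
  moreover have "c3 * (R 0 / 2) < c3 * (R 0 - c2 * (pi - \<beta>) powr q)"
    using assms by (intro mult_strict_left_mono) auto
  ultimately show "c3 * R 0 / 2 < R T" by simp
qed

end

theorem theorem2p7:
  fixes S I :: "real \<Rightarrow> real"
    and \<omega> :: "'n::finite \<Rightarrow> real"
    and \<theta> :: "'n \<Rightarrow> real \<Rightarrow> real"
    and \<alpha>0 p q c1 c2 c3 \<kappa> :: real
  assumes S_per: "\<forall>x. S (x + 2 * pi) = S x"
    and I_per: "\<forall>x. I (x + 2 * pi) = I x"
    and S_lip: "\<exists>L. L-lipschitz_on UNIV S"
    and I_lip: "\<exists>L. L-lipschitz_on UNIV I"
    and \<alpha>0: "0 < \<alpha>0" "\<alpha>0 < pi"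
    and pq: "p \<ge> 1" "q \<ge> 1"
    and cs: "c1 > 0" "c2 > 0" "0 < c3" "c3 \<le> 1"
    and S_right: "\<forall>x\<in>{\<alpha>0..pi}. S x \<le> - c1 * (pi - x) powr p"
    and S_left: "\<forall>x\<in>{-pi..-\<alpha>0}. S x \<ge> c1 * (x + pi) powr p"
    and I_bounds: "\<forall>x\<in>{-pi..pi}. 0 \<le> I x \<and> I x \<le> c2 * (pi - \<bar>x\<bar>) powr q"
    and I_min: "\<forall>x\<in>{-pi..pi}. \<forall>\<phi>. \<bar>\<phi>\<bar> \<le> max \<bar>x\<bar> \<alpha>0 \<longrightarrow> I \<phi> \<ge> c3 * I x"
    and ode: "\<forall>i. \<forall>t\<ge>0. ((\<theta> i) has_real_derivative
               (\<omega> i + \<kappa> / real CARD('n) * (\<Sum>j\<in>UNIV. I (\<theta> j t)) * S (\<theta> i t)))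
               (at t within {0..})"
    and R0_pos: "(\<Sum>j\<in>UNIV. I (\<theta> j 0)) / real CARD('n) > 0"
    and \<kappa>_big: "\<kappa> > max
        (2 * (2 * c2) powr (p / q) / (c1 * c3) * Max (range (\<lambda>i. \<bar>\<omega> i\<bar>))
           / ((\<Sum>j\<in>UNIV. I (\<theta> j 0)) / real CARD('n)) powr (1 + p / q))
        (2 / (c1 * c3 * (pi - \<alpha>0) powr p) * Max (range (\<lambda>i. \<bar>\<omega> i\<bar>))
           / ((\<Sum>j\<in>UNIV. I (\<theta> j 0)) / real CARD('n)))"
  shows "(\<forall>t\<ge>0. (\<Sum>j\<in>UNIV. I (\<theta> j t)) / real CARD('n)
                 > c3 * ((\<Sum>j\<in>UNIV. I (\<theta> j 0)) / real CARD('n)) / 2)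
         \<and> (\<forall>i. bdd_above (\<theta> i ` {0..}) \<and> bdd_below (\<theta> i ` {0..})
              \<and> (SUP t\<in>{0..}. \<theta> i t) - (INF t\<in>{0..}. \<theta> i t) < 2 * pi)"
proof -
  interpret winfree S I \<omega> \<theta> \<kappa>
    using S_per I_per I_lip ode by unfold_locales (auto intro: lipschitz_on_continuous_on)
  define M where "M = Max (range (\<lambda>i. \<bar>\<omega> i\<bar>))"
  have M: "\<forall>i. \<bar>\<omega> i\<bar> \<le> M" unfolding M_def by simp
  then have "0 \<le> M" by (meson abs_ge_zero order_trans)
  have R0: "0 < R 0" using R0_pos by (simp add: R_def)
  obtain \<beta> where \<beta>: "\<alpha>0 < \<beta>" "\<beta> < pi" "c2 * (pi - \<beta>) powr q < R 0 / 2"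
    and coupling: "M < \<kappa> * (c3 * R 0 / 2) * (c1 * (pi - \<beta>) powr p)"
    by (rule exists_trapping_width[OF \<alpha>0 _ _ cs(1-3) \<open>0 \<le> M\<close> R0 \<kappa>_big[folded R_def M_def]])
      (use pq in auto)
  have S_band: "\<forall>x\<in>{\<alpha>0..\<beta>}. S x \<le> - (c1 * (pi - \<beta>) powr p)"
      "\<forall>x\<in>{-\<beta>..-\<alpha>0}. c1 * (pi - \<beta>) powr p \<le> S x"
    using sensitivity_bounds_on_band[OF S_right S_left, where \<beta> = \<beta>] cs pq \<beta> by simp_all
  have R_gt: "c3 * R 0 / 2 < R t" if "0 \<le> t" for t
    by (rule R_stays_above[OF I_bounds I_min, where M = M and \<mu> = "c1 * (pi - \<beta>) powr p"])
      (use cs pq \<beta> coupling M S_band that R0 in auto)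
  have restoring: "restoring_on {0..} \<alpha>0 \<beta> (\<theta> i) (velocity i)" for i
    by (rule restoring_phase[where r = "c3 * R 0 / 2" and \<mu> = "c1 * (pi - \<beta>) powr p"])
      (use cs \<beta> coupling M S_band R_gt R0 in auto)
  have "bdd_above (\<theta> i ` {0..}) \<and> bdd_below (\<theta> i ` {0..})
      \<and> (SUP t\<in>{0..}. \<theta> i t) - (INF t\<in>{0..}. \<theta> i t) < 2 * pi" for i
  proof -
    obtain a b where "b - a < 2 * pi" "\<theta> i ` {0..} \<subseteq> {a..b}"
      using restoring_bounded_oscillation[OF phase_has_derivative restoring \<alpha>0(1) \<beta>(1,2)] by blast
    then show ?thesis by (intro SUP_minus_INF_less) auto
  qed
  with R_gt show ?thesis unfolding R_def by blast
qed

end
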